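(* Suppose $F_i$ satisfies the Production Function Assumption with condition (b), and $W_i$ satisfies the Labor Cost Assumption and the Growth Assumption. Then for every $\mathbf P\in\mathbb R^N_{>0}$ and $P_E>0$, $$\overline\Pi_i(\mathbf P,P_E)=W_i^*\big(\widetilde\Pi_i(\mathbf P,P_E)\big),$$ where $$\widetilde\Pi_i(\mathbf P,P_E)=\max_{\tilde{\mathbf q}_i\in\mathbb R^N_{\ge0},\,\tilde E_i\ge0}\Big\{P_iF_i(\tilde{\mathbf q}_i,\tilde E_i,1)-\sum_{j=1}^NP_j\tilde q_{ij}-P_E\tilde E_i\Big\}.$$ Moreover, if $W_i$ is strictly convex and differentiable, an optimal input vector $(\mathbf q_i^*,E_i^*,L_i^* )$ for $\overline\Pi_i(\mathbf P,P_E)$ is given by $$L_i^*=(W_i')^{-1}\big(\widetilde\Pi_i(\mathbf P,P_E)\big),\quad q^*_{ij}=\tilde q^*_{ij}L_i^*\ (j=1,\dots,N),\quad E_i^*=\tilde E_i^*L_i^*,$$ where $(\tilde{\mathbf q}_i^*,\tilde E_i^* )$ is a maximiser of the problem defining $\widetilde\Pi_i(\mathbf P,P_E)$.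
   Context: Inputs $(\mathbf q_i,E_i,L_i)\in\mathbb R^{N+2}_{\ge0}$ with $\mathbf q_i=(q_{ij})_{j=1}^N$; production function $F_i:\mathbb R^{N+2}_{\ge0}\to\mathbb R_{\ge0}$; labor cost $W_i:\mathbb R_{\ge0}\to\mathbb R_{>0}$. Profit $\Pi_i(\mathbf P,P_E,\mathbf q_i,E_i,L_i)=P_iF_i(\mathbf q_i,E_i,L_i)-\sum_jP_jq_{ij}-P_EE_i-W_i(L_i)$, and $\overline\Pi_i(\mathbf P,P_E)=\max_{(\mathbf q_i,E_i,L_i)\in\mathbb R^{N+2}_{\ge0}}\Pi_i$. The convex conjugate is $W_i^*(y)=\max_{L\ge0}\{Ly-W_i(L)\}$, $y\in\mathbb R$. Production Function Assumption (b): $F_i$ increasing in each argument, upper semi-continuous, concave, homogeneous of degree one ($F_i(\lambda\mathbf x)=\lambda F_i(\mathbf x)$ for $\lambda>0$), and $F_i(\mathbf q,E,L)\le c_iL$ for some $c_i<\infty$. Labor Cost Assumption: $W_i$ strictly increasing, lower semi-continuous, convex. Growth Assumption: $\lim_{L\to\infty}W_i(L)/L=+\infty$. *)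

theory Defs
  imports "HOL-Analysis.Analysis"
begin

definition usc_on :: "'a::topological_space set \<Rightarrow> ('a \<Rightarrow> real) \<Rightarrow> bool" where
  "usc_on S f \<longleftrightarrow> (\<forall>x\<in>S. \<forall>a. f x < a \<longrightarrow> eventually (\<lambda>y. f y < a) (at x within S))"

definition lsc_on :: "'a::topological_space set \<Rightarrow> ('a \<Rightarrow> real) \<Rightarrow> bool" where
  "lsc_on S f \<longleftrightarrow> (\<forall>x\<in>S. \<forall>a. a < f x \<longrightarrow> eventually (\<lambda>y. a < f y) (at x within S))"

definition strict_convex_on :: "'a::real_vector set \<Rightarrow> ('a \<Rightarrow> real) \<Rightarrow> bool" where
  "strict_convex_on S f \<longleftrightarrow> (\<forall>x\<in>S. \<forall>y\<in>S. x \<noteq> y \<longrightarrow> (\<forall>t. 0 < t \<and> t < 1 \<longrightarrow>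
      f ((1 - t) *\<^sub>R x + t *\<^sub>R y) < (1 - t) * f x + t * f y))"

definition input_dom :: "((real^'n) \<times> real \<times> real) set" where
  "input_dom = {(q, E, L). (\<forall>j. 0 \<le> q $ j) \<and> 0 \<le> E \<and> 0 \<le> L}"

definition profit ::
  "'n \<Rightarrow> ((real^'n) \<times> real \<times> real \<Rightarrow> real) \<Rightarrow> (real \<Rightarrow> real) \<Rightarrow> real^'n \<Rightarrow> real
    \<Rightarrow> (real^'n) \<times> real \<times> real \<Rightarrow> real" where
  "profit i F W P PE x = (case x of (q, E, L) \<Rightarrow>
      P $ i * F (q, E, L) - (\<Sum>j\<in>UNIV. P $ j * q $ j) - PE * E - W L)"

definition max_profit ::
  "'n \<Rightarrow> ((real^'n) \<times> real \<times> real \<Rightarrow> real) \<Rightarrow> (real \<Rightarrow> real) \<Rightarrow> real^'n \<Rightarrow> real \<Rightarrow> real" where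
  "max_profit i F W P PE = (SUP x\<in>input_dom. profit i F W P PE x)"

definition unit_profit ::
  "'n \<Rightarrow> ((real^'n) \<times> real \<times> real \<Rightarrow> real) \<Rightarrow> real^'n \<Rightarrow> real \<Rightarrow> real^'n \<Rightarrow> real \<Rightarrow> real" where
  "unit_profit i F P PE q E = P $ i * F (q, E, 1) - (\<Sum>j\<in>UNIV. P $ j * q $ j) - PE * E"

definition unit_max_profit ::
  "'n \<Rightarrow> ((real^'n) \<times> real \<times> real \<Rightarrow> real) \<Rightarrow> real^'n \<Rightarrow> real \<Rightarrow> real" where
  "unit_max_profit i F P PE =
     (SUP qE\<in>{(q, E). (\<forall>j. 0 \<le> q $ j) \<and> 0 \<le> E}. unit_profit i F P PE (fst qE) (snd qE))"

definition convex_conj :: "(real \<Rightarrow> real) \<Rightarrow> real \<Rightarrow> real" where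
  "convex_conj W y = (SUP L\<in>{0..}. L * y - W L)"

end

theory Submission
  imports Defs
begin

text \<open>By homogeneity, an input bundle with labour L > 0 is L times a unit-labour bundle, and its
profit is L times the unit-labour profit minus W L. Maximising first over the bundles with fixed
labour L therefore leaves L * Pi-tilde - W L, and maximising this over L is the convex conjugate
of W at Pi-tilde. The Growth Assumption makes this supremum finite. If L* is a point where W has
slope Pi-tilde, convexity of W makes L* a maximiser of L * Pi-tilde - W L, so scaling an optimal
unit-labour bundle by L* is optimal.\<close>

lemma convex_on_atLeast_above_tangent:
  fixes f :: "real \<Rightarrow> real"
  assumes convex: "convex_on {a..} f" and x: "a \<le> x" and y: "a \<le> y"
    and deriv: "(f has_real_derivative f') (at x within {a..})"
  shows "f y - f x \<ge> f' * (y - x)"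
proof (cases "x = a")
  case False
  then have "x \<in> interior {a..}" using x by auto
  then show ?thesis
    using convex_on_imp_above_tangent[OF convex _ _ _ deriv] y by (auto simp: is_interval_connected)
next
  case x_eq: True
  show ?thesis
  proof (cases "y = a")
    case False
    then have y_gt: "a < y" using y by simp
    have "((\<lambda>z. (f z - f a) / (z - a)) \<longlongrightarrow> f') (at_right a)"
      using deriv unfolding x_eq has_field_derivative_iff
      by (rule tendsto_mono[rotated]) (intro at_le, auto)
    moreover have "eventually (\<lambda>z. (f z - f a) / (z - a) \<le> (f y - f a) / (y - a)) (at_right a)"
      using eventually_at_right_real[OF y_gt]
    proof eventually_elim
      fix z assume z: "z \<in> {a<..<y}"
      have "f z \<le> (f y - f a) / (y - a) * (z - a) + f a"
        using z y_gt by (intro convex_onD_Icc' convex_on_subset[OF convex]) auto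
      then show "(f z - f a) / (z - a) \<le> (f y - f a) / (y - a)"
        using z by (simp add: field_split_simps)
    qed
    ultimately have "f' \<le> (f y - f a) / (y - a)"
      by (simp add: tendsto_upperbound)
    then show ?thesis using x_eq y_gt by (simp add: field_simps)
  qed (use x_eq in simp)
qed

lemma bdd_above_conj_objective:
  fixes W :: "real \<Rightarrow> real"
  assumes W_nonneg: "\<And>L. 0 \<le> L \<Longrightarrow> 0 \<le> W L"
    and W_growth: "filterlim (\<lambda>L. W L / L) at_top at_top"
  shows "bdd_above ((\<lambda>L. L * y - W L) ` {0..})"
proof -
  obtain M where M: "\<And>L. L \<ge> M \<Longrightarrow> y \<le> W L / L"
    using W_growth by (auto simp: filterlim_at_top eventually_at_top_linorder)
  define M' where "M' = max M 1"
  have "L * y - W L \<le> M' * \<bar>y\<bar>" if L: "0 \<le> L" for L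
  proof (cases "M' \<le> L")
    case True
    then have "L * y \<le> W L"
      using M[of L] by (simp add: M'_def field_simps)
    moreover have "0 \<le> M' * \<bar>y\<bar>" by (simp add: M'_def)
    ultimately show ?thesis by linarith
  next
    case False
    have "L * y \<le> M' * \<bar>y\<bar>"
      using False L by (metis abs_ge_self abs_ge_zero mult_left_mono mult_right_mono
          nle_le order_trans)
    then show ?thesis using W_nonneg[OF L] by simp
  qed
  then show ?thesis by (intro bdd_aboveI[of _ "M' * \<bar>y\<bar>"]) auto
qed

lemma convex_conj_upper:
  assumes "bdd_above ((\<lambda>L. L * y - W L) ` {0..})" and "0 \<le> L"
  shows "L * y - W L \<le> convex_conj W y"
  unfolding convex_conj_def using assms by (intro cSUP_upper) auto

locale unit_labour_firm =
  fixes i :: "'n::finite" and F :: "(real^'n) \<times> real \<times> real \<Rightarrow> real" and W :: "real \<Rightarrow> real"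
    and c :: real and P :: "real^'n" and PE :: real
  assumes F_nonneg: "\<And>x. x \<in> input_dom \<Longrightarrow> 0 \<le> F x"
    and F_hom: "\<And>x t. x \<in> input_dom \<Longrightarrow> t > 0 \<Longrightarrow> F (t *\<^sub>R x) = t * F x"
    and F_bound: "\<And>q E L. (q, E, L) \<in> input_dom \<Longrightarrow> F (q, E, L) \<le> c * L"
    and W_pos: "\<And>L. 0 \<le> L \<Longrightarrow> W L > 0"
    and W_growth: "filterlim (\<lambda>L. W L / L) at_top at_top"
    and P_pos: "\<And>j. P $ j > 0"
    and PE_pos: "PE > 0"
begin

lemma input_cost_nonneg:
  assumes "\<forall>j. 0 \<le> q $ j" and "0 \<le> E"
  shows "0 \<le> (\<Sum>j\<in>UNIV. P $ j * q $ j) + PE * E"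
  using assms P_pos PE_pos by (intro add_nonneg_nonneg sum_nonneg) (auto simp: less_imp_le)

lemma unit_profit_le_bound:
  assumes "\<forall>j. 0 \<le> q $ j" and "0 \<le> E"
  shows "unit_profit i F P PE q E \<le> P $ i * c"
proof -
  have "F (q, E, 1) \<le> c"
    using F_bound[of q E 1] assms by (simp add: input_dom_def)
  then have "P $ i * F (q, E, 1) \<le> P $ i * c"
    using P_pos[of i] by simp
  then show ?thesis
    using input_cost_nonneg[OF assms] by (simp add: unit_profit_def)
qed

lemma unit_profit_le_unit_max_profit:
  assumes "\<forall>j. 0 \<le> q $ j" and "0 \<le> E"
  shows "unit_profit i F P PE q E \<le> unit_max_profit i F P PE"
  unfolding unit_max_profit_def
  using assms unit_profit_le_bound
  by (intro cSUP_upper2[where x = "(q, E)"] bdd_aboveI[of _ "P $ i * c"]) auto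

lemma unit_max_profit_least:
  assumes "\<And>q E. \<forall>j. 0 \<le> q $ j \<Longrightarrow> 0 \<le> E \<Longrightarrow> unit_profit i F P PE q E \<le> b"
  shows "unit_max_profit i F P PE \<le> b"
  unfolding unit_max_profit_def
  using assms by (intro cSUP_least) (auto intro: exI[of _ "0 :: real^'n"])

lemma profit_scaled:
  assumes "\<forall>j. 0 \<le> q $ j" and "0 \<le> E" and "0 < L"
  shows "profit i F W P PE (L *\<^sub>R q, L * E, L) = L * unit_profit i F P PE q E - W L"
proof -
  have "F (L *\<^sub>R q, L * E, L) = L * F (q, E, 1)"
    using F_hom[of "(q, E, 1)" L] assms by (simp add: input_dom_def)
  moreover have "(\<Sum>j\<in>UNIV. P $ j * (L *\<^sub>R q) $ j) = L * (\<Sum>j\<in>UNIV. P $ j * q $ j)"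
    by (simp add: sum_distrib_left mult_ac)
  ultimately show ?thesis
    by (simp add: profit_def unit_profit_def algebra_simps)
qed

lemma F_zero_labour:
  assumes "(q, E, 0) \<in> input_dom"
  shows "F (q, E, 0) = 0"
  using F_bound[OF assms] F_nonneg[OF assms] by simp

lemma profit_zero_labour_le:
  assumes "(q, E, 0) \<in> input_dom"
  shows "profit i F W P PE (q, E, 0) \<le> - W 0"
  using F_zero_labour[OF assms] input_cost_nonneg[of q E] assms
  by (simp add: profit_def input_dom_def)

lemma profit_origin: "profit i F W P PE (0, 0, 0) = - W 0"
  using F_zero_labour[of 0 0] by (simp add: profit_def input_dom_def)

lemma profit_le_conj_objective:
  assumes "(q, E, L) \<in> input_dom"
  shows "profit i F W P PE (q, E, L) \<le> L * unit_max_profit i F P PE - W L"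
proof (cases "L = 0")
  case True
  then show ?thesis using profit_zero_labour_le assms by simp
next
  case False
  then have L: "0 < L" and q: "\<forall>j. 0 \<le> (q /\<^sub>R L) $ j" and E: "0 \<le> E / L"
    using assms by (auto simp: input_dom_def)
  have "profit i F W P PE (q, E, L) = L * unit_profit i F P PE (q /\<^sub>R L) (E / L) - W L"
    using profit_scaled[OF q E L] L by simp
  also have "\<dots> \<le> L * unit_max_profit i F P PE - W L"
    using unit_profit_le_unit_max_profit[OF q E] L by simp
  finally show ?thesis .
qed

lemma bdd_above_conj_objective_unit_max_profit:
  "bdd_above ((\<lambda>L. L * unit_max_profit i F P PE - W L) ` {0..})"
  using W_pos W_growth by (intro bdd_above_conj_objective) (auto intro: less_imp_le)

lemma profit_le_convex_conj:
  assumes "x \<in> input_dom"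
  shows "profit i F W P PE x \<le> convex_conj W (unit_max_profit i F P PE)"
proof -
  obtain q E L where x: "x = (q, E, L)" by (cases x)
  then have L: "0 \<le> L" using assms by (simp add: input_dom_def)
  have "profit i F W P PE x \<le> L * unit_max_profit i F P PE - W L"
    using profit_le_conj_objective assms x by simp
  also have "\<dots> \<le> convex_conj W (unit_max_profit i F P PE)"
    by (rule convex_conj_upper[OF bdd_above_conj_objective_unit_max_profit L])
  finally show ?thesis .
qed

lemma bdd_above_profit: "bdd_above (profit i F W P PE ` input_dom)"
  using profit_le_convex_conj by (intro bdd_aboveI) auto

lemma profit_le_max_profit:
  assumes "x \<in> input_dom"
  shows "profit i F W P PE x \<le> max_profit i F W P PE"
  unfolding max_profit_def using assms bdd_above_profit by (rule cSUP_upper)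

lemma conj_objective_le_max_profit:
  assumes "0 \<le> L"
  shows "L * unit_max_profit i F P PE - W L \<le> max_profit i F W P PE"
proof (cases "L = 0")
  case True
  have "profit i F W P PE (0, 0, 0) \<le> max_profit i F W P PE"
    by (rule profit_le_max_profit) (simp add: input_dom_def)
  then show ?thesis using True profit_origin by simp
next
  case False
  then have L: "0 < L" using assms by simp
  have "unit_max_profit i F P PE \<le> (max_profit i F W P PE + W L) / L"
  proof (rule unit_max_profit_least)
    fix q :: "real^'n" and E :: real
    assume q: "\<forall>j. 0 \<le> q $ j" and E: "0 \<le> E"
    have "(L *\<^sub>R q, L * E, L) \<in> input_dom"
      using q E L by (simp add: input_dom_def)
    have "L * unit_profit i F P PE q E - W L \<le> max_profit i F W P PE"
      using profit_le_max_profit[OF \<open>(L *\<^sub>R q, L * E, L) \<in> input_dom\<close>] profit_scaled[OF q E L] by simp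
    then show "unit_profit i F P PE q E \<le> (max_profit i F W P PE + W L) / L"
      using L by (simp add: field_simps)
  qed
  then show ?thesis using L by (simp add: field_simps)
qed

theorem max_profit_eq_convex_conj:
  "max_profit i F W P PE = convex_conj W (unit_max_profit i F P PE)"
proof (rule antisym)
  have "(0, 0, 0) \<in> input_dom" by (simp add: input_dom_def)
  then show "max_profit i F W P PE \<le> convex_conj W (unit_max_profit i F P PE)"
    unfolding max_profit_def using profit_le_convex_conj by (intro cSUP_least) auto
  show "convex_conj W (unit_max_profit i F P PE) \<le> max_profit i F W P PE"
    unfolding convex_conj_def
    using conj_objective_le_max_profit by (intro cSUP_least) auto
qed

theorem scaled_unit_optimum_maximises_profit:
  assumes W_convex: "convex_on {0..} W" and Ls: "0 \<le> Ls"
    and W_slope: "(W has_real_derivative unit_max_profit i F P PE) (at Ls within {0..})"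
    and qs: "\<forall>j. 0 \<le> qs $ j" and Es: "0 \<le> Es"
    and qs_opt: "\<And>q E. \<forall>j. 0 \<le> q $ j \<Longrightarrow> 0 \<le> E \<Longrightarrow>
                   unit_profit i F P PE q E \<le> unit_profit i F P PE qs Es"
    and x: "x \<in> input_dom"
  shows "profit i F W P PE x \<le> profit i F W P PE (Ls *\<^sub>R qs, Ls * Es, Ls)"
proof -
  let ?T = "unit_max_profit i F P PE"
  obtain q E L where x_eq: "x = (q, E, L)" by (cases x)
  then have L: "0 \<le> L" using x by (simp add: input_dom_def)
  have "unit_profit i F P PE qs Es = ?T"
    using unit_max_profit_least[OF qs_opt] unit_profit_le_unit_max_profit[OF qs Es] by simp
  then have profit_star: "profit i F W P PE (Ls *\<^sub>R qs, Ls * Es, Ls) = Ls * ?T - W Ls"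
    using profit_scaled[OF qs Es] Ls profit_origin by (cases "Ls = 0") auto
  have "W L - W Ls \<ge> ?T * (L - Ls)"
    using convex_on_atLeast_above_tangent[OF W_convex Ls L W_slope] .
  then have "L * ?T - W L \<le> Ls * ?T - W Ls" by (simp add: algebra_simps)
  then show ?thesis
    using profit_le_conj_objective x x_eq profit_star by (metis order_trans)
qed

end

theorem proposition2p2:
  fixes i :: "'n::finite" and F :: "(real^'n) \<times> real \<times> real \<Rightarrow> real" and W :: "real \<Rightarrow> real"
    and c :: real and P :: "real^'n" and PE :: real
  assumes F_nonneg: "\<And>x. x \<in> input_dom \<Longrightarrow> 0 \<le> F x"
    and F_mono: "\<And>q E L q' E' L'. (q, E, L) \<in> input_dom \<Longrightarrow> (\<forall>j. q $ j \<le> q' $ j) \<Longrightarrow>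
                   E \<le> E' \<Longrightarrow> L \<le> L' \<Longrightarrow> F (q, E, L) \<le> F (q', E', L')"
    and F_usc: "usc_on input_dom F"
    and F_concave: "concave_on input_dom F"
    and F_hom: "\<And>x (t::real). x \<in> input_dom \<Longrightarrow> t > 0 \<Longrightarrow> F (t *\<^sub>R x) = t * F x"
    and F_bound: "\<And>q E L. (q, E, L) \<in> input_dom \<Longrightarrow> F (q, E, L) \<le> c * L"
    and W_pos: "\<And>L. 0 \<le> L \<Longrightarrow> W L > 0"
    and W_strict_mono: "strict_mono_on {0..} W"
    and W_lsc: "lsc_on {0..} W"
    and W_convex: "convex_on {0..} W"
    and W_growth: "filterlim (\<lambda>L. W L / L) at_top at_top"
    and P_pos: "\<And>j. P $ j > 0"
    and PE_pos: "PE > 0"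
  shows "max_profit i F W P PE = convex_conj W (unit_max_profit i F P PE)
         \<and> (strict_convex_on {0..} W \<and> (\<forall>L\<ge>0. W differentiable (at L within {0..})) \<longrightarrow>
             (\<forall>Ls qs Es. 0 \<le> Ls
                \<and> (W has_real_derivative (unit_max_profit i F P PE)) (at Ls within {0..})
                \<and> (\<forall>j. 0 \<le> qs $ j) \<and> 0 \<le> Es
                \<and> (\<forall>q E. (\<forall>j. 0 \<le> q $ j) \<and> 0 \<le> E \<longrightarrow>
                       unit_profit i F P PE q E \<le> unit_profit i F P PE qs Es)
                \<longrightarrow> (Ls *\<^sub>R qs, Ls * Es, Ls) \<in> input_dom
                    \<and> (\<forall>x\<in>input_dom. profit i F W P PE x \<le> profit i F W P PE (Ls *\<^sub>R qs, Ls * Es, Ls))))"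
proof -
  interpret unit_labour_firm i F W c P PE
    using F_nonneg F_hom F_bound W_pos W_growth P_pos PE_pos by unfold_locales auto
  have optimum: "(Ls *\<^sub>R qs, Ls * Es, Ls) \<in> input_dom
      \<and> (\<forall>x\<in>input_dom. profit i F W P PE x \<le> profit i F W P PE (Ls *\<^sub>R qs, Ls * Es, Ls))"
    if "0 \<le> Ls" "(W has_real_derivative (unit_max_profit i F P PE)) (at Ls within {0..})"
      "\<forall>j. 0 \<le> qs $ j" "0 \<le> Es"
      "\<forall>q E. (\<forall>j. 0 \<le> q $ j) \<and> 0 \<le> E \<longrightarrow>
         unit_profit i F P PE q E \<le> unit_profit i F P PE qs Es"
    for Ls qs Es
    using that scaled_unit_optimum_maximises_profit[OF W_convex that(1,2,3,4)]
    by (simp add: input_dom_def)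
  show ?thesis
    using max_profit_eq_convex_conj optimum by blast
qed

end
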